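(* In the real Euclidean plane, let $l_a,l_b,l_c,l_1,l_2,l_3,l_4$ be seven directed lines such that for each $i\in\{1,2,3,4\}$ the line $l_i$ meets each of $l_a,l_b,l_c$ in exactly one point, and put $A_i=l_a\cap l_i$, $B_i=l_b\cap l_i$, $C_i=l_c\cap l_i$. Then, with signed segment lengths, $$\begin{aligned} &A_1A_3\cdot A_2C_2\cdot A_4C_4\cdot B_1C_1\cdot B_2B_4\cdot B_3C_3+A_2A_4\cdot A_1C_1\cdot A_3C_3\cdot B_1B_3\cdot B_2C_2\cdot B_4C_4\\ &=A_3A_4\cdot A_1C_1\cdot A_2C_2\cdot B_1B_2\cdot B_3C_3\cdot B_4C_4+A_2A_3\cdot A_1C_1\cdot A_4C_4\cdot B_1B_4\cdot B_2C_2\cdot B_3C_3\\ &\quad+A_1A_2\cdot A_3C_3\cdot A_4C_4\cdot B_1C_1\cdot B_2C_2\cdot B_3B_4+A_1A_4\cdot A_2C_2\cdot A_3C_3\cdot B_1C_1\cdot B_2B_3\cdot B_4C_4. \end{aligned}$$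
   Context: Each segment $PQ$ appearing above lies on one of the directed lines: $A_iA_j$ on $l_a$, $B_iB_j$ on $l_b$, and $A_iC_i$, $B_iC_i$ on $l_i$. Its signed length $PQ$ equals $|PQ|$ if the direction from $P$ to $Q$ agrees with the direction of the line it lies on, and $-|PQ|$ otherwise (and $0$ if $P=Q$). *)

theory Defs
  imports "HOL-Analysis.Analysis"
begin

text \<open>A directed line in the real plane is given by a base point and a nonzero direction vector.\<close>
type_synonym dline = "(real^2) \<times> (real^2)"

definition is_dline :: "dline \<Rightarrow> bool" where
  "is_dline L \<longleftrightarrow> snd L \<noteq> 0"

definition line_set :: "dline \<Rightarrow> (real^2) set" where
  "line_set L = {fst L + t *\<^sub>R snd L | t. True}"

text \<open>The unique common point of two lines (meaningful when it exists and is unique).\<close>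
definition meet :: "dline \<Rightarrow> dline \<Rightarrow> real^2" where
  "meet L M = (THE P. P \<in> line_set L \<and> P \<in> line_set M)"

definition slen :: "dline \<Rightarrow> real^2 \<Rightarrow> real^2 \<Rightarrow> real" where
  "slen L P Q = (if P = Q then 0
     else if (\<exists>t>0. Q - P = t *\<^sub>R snd L) then dist P Q else - dist P Q)"

end

theory Submission
  imports Defs
begin

text \<open>Write \<open>A\<^sub>i = P\<^sub>a + u\<^sub>i e\<^sub>a\<close> and \<open>B\<^sub>i = P\<^sub>b + w\<^sub>i e\<^sub>b\<close>, so that
  \<open>A\<^sub>jA\<^sub>k = (u\<^sub>k - u\<^sub>j) |e\<^sub>a|\<close> and \<open>B\<^sub>jB\<^sub>k = (w\<^sub>k - w\<^sub>j) |e\<^sub>b|\<close>.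
  The functional \<open>\<phi> X = e\<^sub>c \<times> (P\<^sub>c - X)\<close> is affine and vanishes exactly on \<open>l\<^sub>c\<close>, and
  measuring along \<open>l\<^sub>i\<close> from a point \<open>X\<close> to \<open>C\<^sub>i\<close> gives \<open>\<phi> X\<close> times a factor \<open>c\<^sub>i\<close> that depends on
  \<open>l\<^sub>i\<close> only. Hence \<open>A\<^sub>iC\<^sub>i = (g + g' u\<^sub>i) c\<^sub>i\<close> and \<open>B\<^sub>iC\<^sub>i = (h + h' w\<^sub>i) c\<^sub>i\<close> with the same
  \<open>c\<^sub>i\<close>. Every term of the identity contains each of \<open>c\<^sub>1, \<dots>, c\<^sub>4, |e\<^sub>a|, |e\<^sub>b|\<close> exactly once,
  and what remains is a polynomial identity in \<open>u\<^sub>i, w\<^sub>i, g, g', h, h'\<close>.\<close>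

definition cross2 :: "real^2 \<Rightarrow> real^2 \<Rightarrow> real" where
  "cross2 x y = x$1 * y$2 - x$2 * y$1"

lemma cross2_add_right [simp]: "cross2 e (x + y) = cross2 e x + cross2 e y"
  by (simp add: cross2_def algebra_simps)

lemma cross2_diff_right [simp]: "cross2 e (x - y) = cross2 e x - cross2 e y"
  by (simp add: cross2_def algebra_simps)

lemma cross2_scaleR_right [simp]: "cross2 e (t *\<^sub>R x) = t * cross2 e x"
  by (simp add: cross2_def algebra_simps)

lemma cross2_self [simp]: "cross2 e e = 0"
  by (simp add: cross2_def)

lemma cross2_eq_0_imp_parallel:
  assumes "e \<noteq> 0" "cross2 e d = 0"
  obtains t where "d = t *\<^sub>R e"
proof (cases "e$1 = 0")
  case True
  then have "e$2 \<noteq> 0"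
    using assms(1) by (metis exhaust_2 vec_eq_iff zero_index)
  with True assms(2) have "d = (d$2 / e$2) *\<^sub>R e"
    by (simp add: cross2_def vec_eq_iff forall_2)
  then show ?thesis by (rule that)
next
  case False
  with assms(2) have "d = (d$1 / e$1) *\<^sub>R e"
    by (simp add: cross2_def vec_eq_iff forall_2 field_simps)
  then show ?thesis by (rule that)
qed

lemma meet_commute: "meet L M = meet M L"
  by (simp add: meet_def conj_commute)

lemma meet_in_line_set:
  assumes "\<exists>!P. P \<in> line_set L \<and> P \<in> line_set M"
  shows "meet L M \<in> line_set L" "meet L M \<in> line_set M"
  using theI'[OF assms] unfolding meet_def by auto

lemma line_set_diff:
  assumes "P \<in> line_set L" "Q \<in> line_set L"
  obtains t where "Q - P = t *\<^sub>R snd L"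
proof -
  obtain r s where "P = fst L + r *\<^sub>R snd L" "Q = fst L + s *\<^sub>R snd L"
    using assms unfolding line_set_def by blast
  then have "Q - P = (s - r) *\<^sub>R snd L" by (simp add: algebra_simps)
  then show ?thesis by (rule that)
qed

lemma line_set_params:
  assumes "\<And>i. i \<in> I \<Longrightarrow> X i \<in> line_set L"
  obtains t where "\<And>i. i \<in> I \<Longrightarrow> X i = fst L + t i *\<^sub>R snd L"
proof -
  have "\<forall>i\<in>I. \<exists>t. X i = fst L + t *\<^sub>R snd L"
    using assms unfolding line_set_def by blast
  then show ?thesis using that by metis
qed

lemma slen_eq_scaleR:
  assumes "is_dline L" "Q - P = t *\<^sub>R snd L"
  shows "slen L P Q = t * norm (snd L)"
proof -
  have d: "snd L \<noteq> 0" using assms(1) by (simp add: is_dline_def)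
  have dist: "dist P Q = \<bar>t\<bar> * norm (snd L)"
    using assms(2) by (metis dist_commute dist_norm norm_scaleR)
  have positive_iff: "(\<exists>s>0. Q - P = s *\<^sub>R snd L) \<longleftrightarrow> t > 0"
    using assms(2) d by (metis scaleR_cancel_right)
  show ?thesis
  proof (cases "t = 0")
    case False
    with assms(2) d have "P \<noteq> Q" by auto
    with False show ?thesis
      using dist positive_iff by (auto simp: slen_def)
  qed (use assms(2) in \<open>simp add: slen_def\<close>)
qed

lemma unique_meet_imp_not_parallel:
  assumes "is_dline L" "is_dline M" "\<exists>!P. P \<in> line_set L \<and> P \<in> line_set M"
  shows "cross2 (snd M) (snd L) \<noteq> 0"
proof
  assume parallel: "cross2 (snd M) (snd L) = 0"
  have "snd M \<noteq> 0" using assms(2) by (simp add: is_dline_def)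
  then obtain t where t: "snd L = t *\<^sub>R snd M"
    using parallel by (rule cross2_eq_0_imp_parallel)
  obtain P where P: "P \<in> line_set L" "P \<in> line_set M" using assms(3) by blast
  then obtain r s where r: "P = fst L + r *\<^sub>R snd L" and s: "P = fst M + s *\<^sub>R snd M"
    unfolding line_set_def by blast
  \<comment> \<open>a parallel direction moves \<open>P\<close> to a second common point\<close>
  have "P + snd L = fst L + (r + 1) *\<^sub>R snd L" "P + snd L = fst M + (s + t) *\<^sub>R snd M"
    using r s t by (simp_all add: algebra_simps)
  then have "P + snd L \<in> line_set L" "P + snd L \<in> line_set M"
    unfolding line_set_def by blast+
  with P assms(3) have "P + snd L = P" by blast
  with assms(1) show False by (simp add: is_dline_def)
qed

lemma slen_to_meet:
  assumes "is_dline L" "is_dline M" "\<exists>!P. P \<in> line_set L \<and> P \<in> line_set M"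
    and "X \<in> line_set L"
  shows "slen L X (meet L M)
           = cross2 (snd M) (fst M - X) * (norm (snd L) / cross2 (snd M) (snd L))"
proof -
  let ?Y = "meet L M"
  have k: "cross2 (snd M) (snd L) \<noteq> 0"
    using assms(1-3) by (rule unique_meet_imp_not_parallel)
  obtain t where t: "?Y - X = t *\<^sub>R snd L"
    using assms(4) meet_in_line_set(1)[OF assms(3)] by (rule line_set_diff)
  obtain s where "?Y = fst M + s *\<^sub>R snd M"
    using meet_in_line_set(2)[OF assms(3)] unfolding line_set_def by blast
  then have "cross2 (snd M) (fst M - X) = cross2 (snd M) (?Y - X)" by simp
  also have "\<dots> = t * cross2 (snd M) (snd L)" by (simp add: t)
  finally have "t = cross2 (snd M) (fst M - X) / cross2 (snd M) (snd L)"
    using k by simp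
  then show ?thesis using slen_eq_scaleR[OF assms(1) t] by simp
qed

lemma six_term_identity:
  fixes u w c :: "nat \<Rightarrow> real" and na nb g g' h h' :: real
  defines "a j k \<equiv> (u k - u j) * na" and "b j k \<equiv> (w k - w j) * nb"
    and "p i \<equiv> (g + g' * u i) * c i" and "q i \<equiv> (h + h' * w i) * c i"
  shows "a 1 3 * p 2 * p 4 * q 1 * b 2 4 * q 3 + a 2 4 * p 1 * p 3 * b 1 3 * q 2 * q 4
       = a 3 4 * p 1 * p 2 * b 1 2 * q 3 * q 4 + a 2 3 * p 1 * p 4 * b 1 4 * q 2 * q 3
         + a 1 2 * p 3 * p 4 * q 1 * q 2 * b 3 4 + a 1 4 * p 2 * p 3 * q 1 * b 2 3 * q 4"
  unfolding assms by algebra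

theorem theorem11:
  fixes la lb lc :: dline and l :: "nat \<Rightarrow> dline"
    and A B C :: "nat \<Rightarrow> real^2"
  assumes "is_dline la" "is_dline lb" "is_dline lc"
    and "\<And>i. i \<in> {1,2,3,4} \<Longrightarrow> is_dline (l i)"
    and "\<And>i M. i \<in> {1,2,3,4} \<Longrightarrow> M \<in> {la, lb, lc} \<Longrightarrow>
           \<exists>!P. P \<in> line_set (l i) \<and> P \<in> line_set M"
    and A_def: "\<And>i. A i = meet la (l i)"
    and B_def: "\<And>i. B i = meet lb (l i)"
    and C_def: "\<And>i. C i = meet lc (l i)"
  shows "slen la (A 1) (A 3) * slen (l 2) (A 2) (C 2) * slen (l 4) (A 4) (C 4)
           * slen (l 1) (B 1) (C 1) * slen lb (B 2) (B 4) * slen (l 3) (B 3) (C 3)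
         + slen la (A 2) (A 4) * slen (l 1) (A 1) (C 1) * slen (l 3) (A 3) (C 3)
           * slen lb (B 1) (B 3) * slen (l 2) (B 2) (C 2) * slen (l 4) (B 4) (C 4)
       = slen la (A 3) (A 4) * slen (l 1) (A 1) (C 1) * slen (l 2) (A 2) (C 2)
           * slen lb (B 1) (B 2) * slen (l 3) (B 3) (C 3) * slen (l 4) (B 4) (C 4)
         + slen la (A 2) (A 3) * slen (l 1) (A 1) (C 1) * slen (l 4) (A 4) (C 4)
           * slen lb (B 1) (B 4) * slen (l 2) (B 2) (C 2) * slen (l 3) (B 3) (C 3)
         + slen la (A 1) (A 2) * slen (l 3) (A 3) (C 3) * slen (l 4) (A 4) (C 4)
           * slen (l 1) (B 1) (C 1) * slen (l 2) (B 2) (C 2) * slen lb (B 3) (B 4)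
         + slen la (A 1) (A 4) * slen (l 2) (A 2) (C 2) * slen (l 3) (A 3) (C 3)
           * slen (l 1) (B 1) (C 1) * slen lb (B 2) (B 3) * slen (l 4) (B 4) (C 4)"
proof -
  let ?I = "{1,2,3,4} :: nat set"
  have meets: "\<exists>!P. P \<in> line_set (l i) \<and> P \<in> line_set la"
    "\<exists>!P. P \<in> line_set (l i) \<and> P \<in> line_set lb"
    "\<exists>!P. P \<in> line_set (l i) \<and> P \<in> line_set lc" if "i \<in> ?I" for i
    using assms(5)[OF that] by simp_all
  have A_on: "A i \<in> line_set la" "A i \<in> line_set (l i)"
    and B_on: "B i \<in> line_set lb" "B i \<in> line_set (l i)" if "i \<in> ?I" for i
    using meet_in_line_set[OF meets(1)[OF that]] meet_in_line_set[OF meets(2)[OF that]]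
    by (simp_all add: A_def B_def meet_commute)
  obtain u where u: "\<And>i. i \<in> ?I \<Longrightarrow> A i = fst la + u i *\<^sub>R snd la"
    using A_on(1) line_set_params by metis
  obtain w where w: "\<And>i. i \<in> ?I \<Longrightarrow> B i = fst lb + w i *\<^sub>R snd lb"
    using B_on(1) line_set_params by metis
  define c where "c i = norm (snd (l i)) / cross2 (snd lc) (snd (l i))" for i
  have AA: "slen la (A j) (A k) = (u k - u j) * norm (snd la)" if "j \<in> ?I" "k \<in> ?I" for j k
    by (rule slen_eq_scaleR[OF assms(1)]) (simp add: u[OF that(1)] u[OF that(2)] algebra_simps)
  have BB: "slen lb (B j) (B k) = (w k - w j) * norm (snd lb)" if "j \<in> ?I" "k \<in> ?I" for j k
    by (rule slen_eq_scaleR[OF assms(2)]) (simp add: w[OF that(1)] w[OF that(2)] algebra_simps)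
  define g g' h h' where "g = cross2 (snd lc) (fst lc - fst la)"
    and "g' = - cross2 (snd lc) (snd la)" and "h = cross2 (snd lc) (fst lc - fst lb)"
    and "h' = - cross2 (snd lc) (snd lb)"
  have AC: "slen (l i) (A i) (C i) = (g + g' * u i) * c i"
    and BC: "slen (l i) (B i) (C i) = (h + h' * w i) * c i" if "i \<in> ?I" for i
    using slen_to_meet[OF assms(4)[OF that] assms(3) meets(3)[OF that]] A_on(2) B_on(2) that
    by (simp_all add: C_def meet_commute c_def g_def g'_def h_def h'_def u w)
  show ?thesis
    using six_term_identity[where u = u and w = w and c = c and g = g and g' = g' and h = h
        and h' = h' and na = "norm (snd la)" and nb = "norm (snd lb)"]
    by (simp only: AA BB AC BC insert_iff singleton_iff simp_thms nat.simps)
qed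

end
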